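(* Let $X\subset\mathbb{R}^d$ be compact and let $K\colon\mathbb{R}\times\mathbb{R}\to\mathbb{R}$ be a continuous positive definite kernel with $|K(s,t)|\le1$. Let $Z=\mathbb{R}^d\times\mathbb{R}\times\mathbb{R}$, for $z=(a,b,t)\in Z$ let $\psi_z(x)=K(\langle a,x\rangle+b,t)$ on $X$, and for a finite Borel measure $\rho$ on $Z$ let $K_\rho(x,x')=\int_Z\psi_z(x)\psi_z(x')\,d\rho(z)$ on $X\times X$. Let $\mathcal{F}$ be the closure of $\{\psi_z:z\in Z\}$ in $C(X)$ with respect to the sup norm, and let $$\mathrm{Cone}(\mathcal{F})=\Big\{(x,x')\mapsto\sum_{j=1}^m w_jf_j(x)f_j(x') : m\in\mathbb{N},\ w_j\ge0,\ f_j\in\mathcal{F}\Big\}.$$ Then the closure of $\{K_\rho:\rho \text{ a finite Borel measure on } Z\}$ in the sup norm on $X\times X$ equals the closure of $\mathrm{Cone}(\mathcal{F})$ in the sup norm on $X\times X$. *)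

theory Defs
  imports "HOL-Analysis.Analysis"
begin

definition pd_kernel :: "(real \<Rightarrow> real \<Rightarrow> real) \<Rightarrow> bool" where
  "pd_kernel K \<longleftrightarrow> (\<forall>s t. K s t = K t s) \<and>
     (\<forall>(n::nat) (c::nat \<Rightarrow> real) (x::nat \<Rightarrow> real).
        (\<Sum>i<n. \<Sum>j<n. c i * c j * K (x i) (x j)) \<ge> 0)"

definition psi :: "(real \<Rightarrow> real \<Rightarrow> real) \<Rightarrow> 'a::euclidean_space \<times> real \<times> real \<Rightarrow> 'a \<Rightarrow> real" where
  "psi K z x = (case z of (a, b, t) \<Rightarrow> K (inner a x + b) t)"

definition K_rho :: "(real \<Rightarrow> real \<Rightarrow> real) \<Rightarrow> ('a::euclidean_space \<times> real \<times> real) measure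
     \<Rightarrow> 'a \<Rightarrow> 'a \<Rightarrow> real" where
  "K_rho K \<rho> x x' = (\<integral>z. psi K z x * psi K z x' \<partial>\<rho>)"

text \<open>Closure in the sup norm over the domain A, of a set of functions considered
  as functions on A only (represented extensionally: value undefined outside A).\<close>
definition sup_closure :: "'b set \<Rightarrow> ('b \<Rightarrow> real) set \<Rightarrow> ('b \<Rightarrow> real) set" where
  "sup_closure A S = {g \<in> extensional A.
      \<forall>e>0. \<exists>f\<in>S. \<forall>p\<in>A. \<bar>f p - g p\<bar> < e}"

definition feature_cone :: "('a \<Rightarrow> real) set \<Rightarrow> ('a \<times> 'a \<Rightarrow> real) set" where
  "feature_cone F = {(\<lambda>(x, x'). \<Sum>j<m. w j * f j x * f j x') | (m::nat) (w::nat \<Rightarrow> real) f.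
      \<forall>j<m. w j \<ge> 0 \<and> f j \<in> F}"

end

(*
  It suffices to approximate each generator of one side uniformly on X x X by generators of
  the other.  A measure with finitely many atoms, of weights w_j at points z_j, gives
  K_rho = sum_j w_j psi_{z_j}(x) psi_{z_j}(x'), a cone element; conversely, replacing each f_j
  of a cone element by a uniformly close psi_{z_j} changes it little, since everything is
  bounded by 1.  For a general finite Borel measure rho, tightness puts all but a small part of
  its mass on a compact set C; cutting C into small Borel pieces A_j around points z_j and using
  uniform continuity of (z, x, x') |-> psi_z(x) psi_z(x') on C x X x X shows that K_rho is
  uniformly close to sum_j rho(A_j) psi_{z_j}(x) psi_{z_j}(x').
*)
theory Submission
  imports Defs
begin

definition uniformly_approximable :: "'b set \<Rightarrow> ('b \<Rightarrow> real) set \<Rightarrow> ('b \<Rightarrow> real) \<Rightarrow> bool" where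
  "uniformly_approximable A S g \<longleftrightarrow> (\<forall>e>0. \<exists>f\<in>S. \<forall>p\<in>A. \<bar>f p - g p\<bar> < e)"

lemma sup_closure_iff:
  "g \<in> sup_closure A S \<longleftrightarrow> g \<in> extensional A \<and> uniformly_approximable A S g"
  by (simp add: sup_closure_def uniformly_approximable_def)

lemma uniformly_approximable_trans:
  assumes ST: "\<And>f. f \<in> S \<Longrightarrow> uniformly_approximable A T f"
    and g: "uniformly_approximable A S g"
  shows "uniformly_approximable A T g"
  unfolding uniformly_approximable_def
proof (intro allI impI)
  fix e :: real assume "e > 0"
  then obtain f where f: "f \<in> S" "\<forall>p\<in>A. \<bar>f p - g p\<bar> < e/2"
    using g[unfolded uniformly_approximable_def, rule_format, of "e/2"] by auto
  then obtain h where h: "h \<in> T" "\<forall>p\<in>A. \<bar>h p - f p\<bar> < e/2"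
    using ST[OF f(1), unfolded uniformly_approximable_def, rule_format, of "e/2"] \<open>e > 0\<close> by auto
  have "\<bar>h p - g p\<bar> < e" if "p \<in> A" for p
    using f(2)[rule_format, OF that] h(2)[rule_format, OF that] by linarith
  with h(1) show "\<exists>h\<in>T. \<forall>p\<in>A. \<bar>h p - g p\<bar> < e" by blast
qed

lemma sup_closure_eqI:
  assumes "\<And>f. f \<in> S \<Longrightarrow> uniformly_approximable A T f"
    and "\<And>f. f \<in> T \<Longrightarrow> uniformly_approximable A S f"
  shows "sup_closure A S = sup_closure A T"
  using uniformly_approximable_trans[of S A T] uniformly_approximable_trans[of T A S] assms
  by (auto simp: sup_closure_iff)

lemma restrict_in_sup_closure: "f \<in> S \<Longrightarrow> restrict f A \<in> sup_closure A S"
  unfolding sup_closure_iff uniformly_approximable_def by force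

section \<open>Quadrature for finite Borel measures\<close>

lemma finite_measure_tight:
  fixes M :: "'a::{real_normed_vector, heine_borel} measure"
  assumes "finite_measure M" and "sets M = sets borel" and "e > 0"
  obtains C where "compact C" and "measure M (- C) < e"
proof -
  interpret finite_measure M by fact
  have "- cball 0 r \<in> sets M" for r :: real
    unfolding assms(2) by (intro borel_open open_Compl closed_cball)
  moreover have "decseq (\<lambda>n. - cball (0::'a) (real n))"
    by (rule decseq_SucI) auto
  ultimately have "(\<lambda>n. measure M (- cball 0 (real n))) \<longlonglongrightarrow> measure M (\<Inter>n. - cball (0::'a) (real n))"
    by (intro finite_Lim_measure_decseq) auto
  moreover have "(\<Inter>n. - cball (0::'a) (real n)) = {}"
  proof -
    have "z \<notin> (\<Inter>n. - cball 0 (real n))" for z :: 'a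
    proof -
      obtain n where "norm z \<le> real n"
        using real_arch_simple by blast
      then show ?thesis
        by auto
    qed
    then show ?thesis
      by blast
  qed
  ultimately have "(\<lambda>n. measure M (- cball 0 (real n))) \<longlonglongrightarrow> 0"
    by simp
  then have "eventually (\<lambda>n. measure M (- cball 0 (real n)) < e) sequentially"
    using \<open>e > 0\<close> by (rule order_tendstoD)
  then obtain n where "measure M (- cball 0 (real n)) < e"
    by (auto simp: eventually_sequentially)
  then show thesis
    using that[of "cball 0 (real n)"] by simp
qed

lemma compact_partition_small_borel:
  fixes C :: "'a::metric_space set"
  assumes "compact C" and "\<delta> > 0"
  obtains A :: "nat \<Rightarrow> 'a set" and m :: nat and c :: "nat \<Rightarrow> 'a"
  where "disjoint_family_on A {..<m}" and "(\<Union>j<m. A j) = C"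
    and "\<And>j. j < m \<Longrightarrow> A j \<in> sets borel"
    and "\<And>j. j < m \<Longrightarrow> c j \<in> C \<and> A j \<subseteq> ball (c j) \<delta>"
proof -
  obtain D where D: "D \<subseteq> C" "finite D" "C \<subseteq> (\<Union>d\<in>D. ball d \<delta>)"
    using compactE_image[OF \<open>compact C\<close>, of C "\<lambda>d. ball d \<delta>"] \<open>\<delta> > 0\<close> by force
  obtain ds where ds: "set ds = D"
    using finite_list[OF D(2)] by blast
  define B where "B j = ball (ds ! j) \<delta> \<inter> C" for j
  have "(\<Union>j<length ds. disjointed B j) = (\<Union>j<length ds. B j)"
    using finite_UN_disjointed_eq[of B "length ds"] by (simp add: atLeast0LessThan)
  also have "\<dots> = C"
    using D(3) ds by (fastforce simp: B_def in_set_conv_nth)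
  finally have union: "(\<Union>j<length ds. disjointed B j) = C" .
  have borel: "disjointed B j \<in> sets borel" if "j < length ds" for j
    using compact_imp_closed[OF \<open>compact C\<close>]
    unfolding disjointed_def B_def by (intro sets.Diff sets.finite_UN sets.Int) auto
  have small: "ds ! j \<in> C \<and> disjointed B j \<subseteq> ball (ds ! j) \<delta>" if "j < length ds" for j
    using disjointed_subset[of B j] D(1) ds that by (auto simp: B_def)
  have disjoint: "disjoint_family_on (disjointed B) {..<length ds}"
    using disjoint_family_disjointed by (rule disjoint_family_on_mono[OF subset_UNIV])
  show thesis
    by (rule that[OF disjoint union borel small])
qed

lemma abs_integral_sub_partition_sum_le:
  fixes f :: "'a \<Rightarrow> real" and m :: nat
  assumes "finite_measure M"
    and f: "f \<in> borel_measurable M" "\<And>z. z \<in> space M \<Longrightarrow> \<bar>f z\<bar> \<le> B"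
    and A: "disjoint_family_on A {..<m}" "\<And>j. j < m \<Longrightarrow> A j \<in> sets M"
    and close: "\<And>j z. j < m \<Longrightarrow> z \<in> A j \<Longrightarrow> \<bar>f z - y j\<bar> \<le> \<epsilon>" and "\<epsilon> \<ge> 0"
  shows "\<bar>(\<integral>z. f z \<partial>M) - (\<Sum>j<m. measure M (A j) * y j)\<bar>
           \<le> B * measure M (space M - (\<Union>j<m. A j)) + \<epsilon> * measure M (space M)"
proof -
  interpret finite_measure M by fact
  have integrable_indicator: "integrable M (indicator S :: 'a \<Rightarrow> real)" if "S \<in> sets M" for S
    using that by (intro integrable_real_indicator) (auto simp: less_top[symmetric])
  define U where "U = (\<Union>j<m. A j)"
  define s where "s z = (\<Sum>j<m. indicator (A j) z * y j)" for z
  have U: "U \<in> sets M"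
    unfolding U_def using A(2) by (intro sets.finite_UN) auto
  have int_f: "integrable M f"
    using f by (intro integrable_const_bound[where B=B]) auto
  have int_s: "integrable M s"
    unfolding s_def using A(2)
    by (intro Bochner_Integration.integrable_sum integrable_mult_left integrable_indicator) auto
  have int_bound: "integrable M (\<lambda>z. B * indicator (space M - U) z + \<epsilon>)"
    using U by (intro Bochner_Integration.integrable_add integrable_mult_right integrable_indicator
      integrable_const) auto
  have "(\<integral>z. s z \<partial>M) = (\<Sum>j<m. measure M (A j) * y j)"
    unfolding s_def using A(2)
    by (subst Bochner_Integration.integral_sum) (auto simp: integrable_indicator Int_absorb2)
  then have diff_eq: "(\<integral>z. f z \<partial>M) - (\<Sum>j<m. measure M (A j) * y j) = (\<integral>z. f z - s z \<partial>M)"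
    using int_f int_s by simp
  have pointwise: "\<bar>f z - s z\<bar> \<le> B * indicator (space M - U) z + \<epsilon>" if z: "z \<in> space M" for z
  proof (cases "z \<in> U")
    case True
    then obtain j where j: "j < m" "z \<in> A j"
      by (auto simp: U_def)
    have "s z = (\<Sum>i\<in>{j}. indicator (A i) z * y i)"
      unfolding s_def using A(1) j
      by (intro sum.mono_neutral_right) (auto simp: disjoint_family_on_def indicator_def)
    with j(2) have "s z = y j"
      by simp
    with close[OF j] True show ?thesis
      by simp
  next
    case False
    then have "s z = 0"
      by (auto simp: s_def U_def indicator_def)
    then show ?thesis
      using f(2)[OF z] False z \<open>\<epsilon> \<ge> 0\<close> by simp
  qed
  have "\<bar>\<integral>z. f z - s z \<partial>M\<bar> \<le> (\<integral>z. B * indicator (space M - U) z + \<epsilon> \<partial>M)"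
    using integral_abs_bound[of M "\<lambda>z. f z - s z"]
      integral_mono[OF integrable_abs[OF Bochner_Integration.integrable_diff[OF int_f int_s]] int_bound pointwise]
    by linarith
  also have "\<dots> = B * measure M (space M - U) + \<epsilon> * measure M (space M)"
    using U int_bound
    by (subst Bochner_Integration.integral_add)
      (auto simp: integrable_indicator Int_absorb1 mult.commute)
  finally show ?thesis
    by (simp only: diff_eq U_def)
qed

lemma finite_measure_quadrature_on_compact:
  fixes M :: "'z::metric_space measure" and g :: "'z \<times> 'p::metric_space \<Rightarrow> real"
  assumes M: "finite_measure M" "sets M = sets borel"
    and "compact C" "compact P"
    and g: "continuous_on (UNIV \<times> P) g" "\<And>z p. p \<in> P \<Longrightarrow> \<bar>g (z, p)\<bar> \<le> B"
    and "\<epsilon> > 0"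
  obtains m :: nat and w :: "nat \<Rightarrow> real" and c :: "nat \<Rightarrow> 'z"
  where "\<And>j. j < m \<Longrightarrow> w j \<ge> 0"
    and "\<And>p. p \<in> P \<Longrightarrow> \<bar>(\<integral>z. g (z, p) \<partial>M) - (\<Sum>j<m. w j * g (c j, p))\<bar>
           \<le> B * measure M (- C) + \<epsilon> * measure M UNIV"
proof -
  have space: "space M = UNIV"
    using sets_eq_imp_space_eq[OF M(2)] by simp
  have uniform: "uniformly_continuous_on (C \<times> P) g"
    using g(1) \<open>compact C\<close> \<open>compact P\<close>
    by (intro compact_uniformly_continuous compact_Times) (auto intro: continuous_on_subset)
  obtain \<delta> where "\<delta> > 0" and \<delta>:
    "\<And>q q'. q \<in> C \<times> P \<Longrightarrow> q' \<in> C \<times> P \<Longrightarrow> dist q' q < \<delta> \<Longrightarrow> dist (g q') (g q) < \<epsilon>"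
    by (rule uniformly_continuous_onE[OF uniform \<open>\<epsilon> > 0\<close>]) (rule that)
  obtain A and m :: nat and c where A: "disjoint_family_on A {..<m}" "(\<Union>j<m. A j) = C"
    "\<And>j. j < m \<Longrightarrow> A j \<in> sets borel" and c: "\<And>j. j < m \<Longrightarrow> c j \<in> C \<and> A j \<subseteq> ball (c j) \<delta>"
    using compact_partition_small_borel[OF \<open>compact C\<close> \<open>\<delta> > 0\<close>] by metis
  show thesis
  proof (rule that[of m "\<lambda>j. measure M (A j)" c])
    fix p assume "p \<in> P"
    have "continuous_on UNIV (\<lambda>z. g (z, p))"
      using \<open>p \<in> P\<close> by (intro continuous_on_compose2[OF g(1)] continuous_intros) auto
    then have meas: "(\<lambda>z. g (z, p)) \<in> borel_measurable M"
      using measurable_cong_sets[OF M(2) refl] borel_measurable_continuous_onI by blast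
    have close: "\<bar>g (z, p) - g (c j, p)\<bar> \<le> \<epsilon>" if "j < m" "z \<in> A j" for j z
    proof -
      have "z \<in> C" "dist (c j, p) (z, p) < \<delta>"
        using A(2) c[OF \<open>j < m\<close>] that by (auto simp: dist_Pair_Pair dist_commute)
      then show ?thesis
        using \<delta>[of "(z, p)" "(c j, p)"] c[OF \<open>j < m\<close>] \<open>p \<in> P\<close> by (simp add: dist_real_def)
    qed
    have "\<bar>(\<integral>z. g (z, p) \<partial>M) - (\<Sum>j<m. measure M (A j) * g (c j, p))\<bar>
        \<le> B * measure M (space M - (\<Union>j<m. A j)) + \<epsilon> * measure M (space M)"
      using M(2) A(1,3) \<open>p \<in> P\<close> \<open>\<epsilon> > 0\<close>
      by (intro abs_integral_sub_partition_sum_le[OF M(1) meas] close g(2)) auto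
    then show "\<bar>(\<integral>z. g (z, p) \<partial>M) - (\<Sum>j<m. measure M (A j) * g (c j, p))\<bar>
        \<le> B * measure M (- C) + \<epsilon> * measure M UNIV"
      by (simp add: space A(2) Compl_eq_Diff_UNIV)
  qed simp
qed

lemma finite_measure_uniform_quadrature:
  fixes M :: "'z::{real_normed_vector, heine_borel} measure"
    and g :: "'z \<times> 'p::metric_space \<Rightarrow> real"
  assumes M: "finite_measure M" "sets M = sets borel"
    and "compact P"
    and g: "continuous_on (UNIV \<times> P) g" "\<And>z p. p \<in> P \<Longrightarrow> \<bar>g (z, p)\<bar> \<le> B"
    and "e > 0"
  obtains m :: nat and w :: "nat \<Rightarrow> real" and c :: "nat \<Rightarrow> 'z"
  where "\<And>j. j < m \<Longrightarrow> w j \<ge> 0"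
    and "\<And>p. p \<in> P \<Longrightarrow> \<bar>(\<integral>z. g (z, p) \<partial>M) - (\<Sum>j<m. w j * g (c j, p))\<bar> < e"
proof -
  define \<epsilon> where "\<epsilon> = e / (2 * (measure M UNIV + 1))"
  have "\<epsilon> > 0"
    using \<open>e > 0\<close> by (simp add: \<epsilon>_def add_nonneg_pos)
  have "\<epsilon> * measure M UNIV = e / 2 * (measure M UNIV / (measure M UNIV + 1))"
    by (simp add: \<epsilon>_def)
  also have "\<dots> < e / 2 * 1"
    using \<open>e > 0\<close> by (intro mult_strict_left_mono) (auto simp: add_nonneg_pos)
  finally have \<epsilon>_total: "\<epsilon> * measure M UNIV < e / 2"
    by simp
  have "e / (2 * (\<bar>B\<bar> + 1)) > 0"
    using \<open>e > 0\<close> by (intro divide_pos_pos) (auto simp: add_nonneg_pos)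
  then obtain C where "compact C" and C_tail: "measure M (- C) < e / (2 * (\<bar>B\<bar> + 1))"
    using finite_measure_tight[OF M] by blast
  have "B * measure M (- C) \<le> \<bar>B\<bar> * (e / (2 * (\<bar>B\<bar> + 1)))"
    using C_tail by (intro order.trans[OF abs_ge_self[THEN mult_right_mono] mult_left_mono]) auto
  also have "\<dots> < e / 2"
    using \<open>e > 0\<close> by (simp add: field_simps)
  finally have tail: "B * measure M (- C) < e / 2" .
  obtain m :: nat and w c where w: "\<And>j. j < m \<Longrightarrow> w j \<ge> 0"
    and err: "\<And>p. p \<in> P \<Longrightarrow> \<bar>(\<integral>z. g (z, p) \<partial>M) - (\<Sum>j<m. w j * g (c j, p))\<bar>
           \<le> B * measure M (- C) + \<epsilon> * measure M UNIV"
    by (rule finite_measure_quadrature_on_compact[OF M \<open>compact C\<close> \<open>compact P\<close> g \<open>\<epsilon> > 0\<close>])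
      (assumption | rule that)+
  show thesis
  proof (rule that[OF w])
    show "\<bar>(\<integral>z. g (z, p) \<partial>M) - (\<Sum>j<m. w j * g (c j, p))\<bar> < e" if "p \<in> P" for p
      using err[OF that] tail \<epsilon>_total by linarith
  qed
qed

lemma finite_point_masses_measure:
  fixes z :: "nat \<Rightarrow> 'b::topological_space" and m :: nat
  assumes w: "\<And>j. j < m \<Longrightarrow> w j \<ge> 0"
  obtains \<rho> :: "'b measure"
  where "sets \<rho> = sets borel" and "finite_measure \<rho>"
    and "\<And>f :: 'b \<Rightarrow> real. f \<in> borel_measurable borel \<Longrightarrow> (\<integral>y. f y \<partial>\<rho>) = (\<Sum>j<m. w j * f (z j))"
proof
  let ?\<rho> = "distr (point_measure {..<m} (\<lambda>j. ennreal (w j))) borel z"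
  show "sets ?\<rho> = sets borel"
    by simp
  have "emeasure ?\<rho> (space ?\<rho>) = emeasure (point_measure {..<m} (\<lambda>j. ennreal (w j))) {..<m}"
    by (subst emeasure_distr) (auto simp: space_point_measure)
  also have "\<dots> = (\<Sum>j<m. ennreal (w j))"
    by (subst emeasure_point_measure_finite) auto
  finally show "finite_measure ?\<rho>"
    by (intro finite_measureI) auto
  fix f :: "'b \<Rightarrow> real" assume f: "f \<in> borel_measurable borel"
  have "(\<integral>y. f y \<partial>?\<rho>) = (\<integral>j. f (z j) \<partial>point_measure {..<m} (\<lambda>j. ennreal (w j)))"
    by (rule integral_distr) (auto simp: f)
  also have "\<dots> = (\<integral>j. w j * f (z j) \<partial>count_space {..<m})"
    unfolding point_measure_def using w by (subst integral_density) (auto simp: f)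
  also have "\<dots> = (\<Sum>j<m. w j * f (z j))"
    by (subst lebesgue_integral_count_space_finite) auto
  finally show "(\<integral>y. f y \<partial>?\<rho>) = (\<Sum>j<m. w j * f (z j))" .
qed

lemma abs_mult_sub_mult_le:
  fixes a b a' b' \<eta> :: real
  assumes "\<bar>a - a'\<bar> \<le> \<eta>" "\<bar>b - b'\<bar> \<le> \<eta>" "\<bar>a'\<bar> \<le> 1" "\<bar>b'\<bar> \<le> 1" "\<eta> \<le> 1"
  shows "\<bar>a * b - a' * b'\<bar> \<le> 3 * \<eta>"
proof -
  have "a * b - a' * b' = (a - a') * b + a' * (b - b')"
    by algebra
  moreover have "\<bar>(a - a') * b\<bar> \<le> \<eta> * 2"
    unfolding abs_mult using assms by (intro mult_mono) auto
  moreover have "\<bar>a' * (b - b')\<bar> \<le> 1 * \<eta>"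
    unfolding abs_mult using assms by (intro mult_mono) auto
  ultimately show ?thesis
    by linarith
qed

lemma uniformly_approximable_weighted_square_sum:
  fixes f :: "nat \<Rightarrow> 'b \<Rightarrow> real" and m :: nat
  assumes w: "\<And>j. j < m \<Longrightarrow> w j \<ge> 0"
    and f: "\<And>j. j < m \<Longrightarrow> uniformly_approximable X S (f j)"
    and S: "\<And>s x. s \<in> S \<Longrightarrow> x \<in> X \<Longrightarrow> \<bar>s x\<bar> \<le> 1"
    and "e > 0"
  shows "\<exists>s. (\<forall>j<m. s j \<in> S) \<and> (\<forall>x\<in>X. \<forall>x'\<in>X.
           \<bar>(\<Sum>j<m. w j * f j x * f j x') - (\<Sum>j<m. w j * s j x * s j x')\<bar> < e)"
proof -
  define W where "W = (\<Sum>j<m. w j)"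
  have "W \<ge> 0"
    unfolding W_def using w by (intro sum_nonneg) auto
  define \<eta> where "\<eta> = min 1 (e / (4 * (W + 1)))"
  have "\<eta> > 0" "\<eta> \<le> 1"
    using \<open>e > 0\<close> \<open>W \<ge> 0\<close> by (auto simp: \<eta>_def)
  have "3 * \<eta> * W \<le> 3 * (e / (4 * (W + 1))) * W"
    unfolding \<eta>_def using \<open>W \<ge> 0\<close> by (intro mult_right_mono) auto
  also have "\<dots> = 3 / 4 * e * (W / (W + 1))"
    using \<open>W \<ge> 0\<close> by (simp add: field_simps)
  also have "\<dots> \<le> 3 / 4 * e * 1"
    using \<open>e > 0\<close> \<open>W \<ge> 0\<close> by (intro mult_left_mono) auto
  also have "\<dots> < e"
    using \<open>e > 0\<close> by simp
  finally have \<eta>_total: "3 * \<eta> * W < e" .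
  have "\<exists>s\<in>S. \<forall>x\<in>X. \<bar>s x - f j x\<bar> < \<eta>" if "j < m" for j
    using f[OF that] \<open>\<eta> > 0\<close> unfolding uniformly_approximable_def by blast
  then obtain s where s: "\<And>j. j < m \<Longrightarrow> s j \<in> S \<and> (\<forall>x\<in>X. \<bar>s j x - f j x\<bar> < \<eta>)"
    by metis
  have "\<bar>(\<Sum>j<m. w j * f j x * f j x') - (\<Sum>j<m. w j * s j x * s j x')\<bar> < e"
    if "x \<in> X" "x' \<in> X" for x x'
  proof -
    have close: "\<bar>f j x * f j x' - s j x * s j x'\<bar> \<le> 3 * \<eta>" if "j < m" for j
      using s[OF that] S \<open>x \<in> X\<close> \<open>x' \<in> X\<close> \<open>\<eta> \<le> 1\<close>
      by (intro abs_mult_sub_mult_le) (auto simp: abs_minus_commute less_imp_le)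
    have "\<bar>(\<Sum>j<m. w j * f j x * f j x') - (\<Sum>j<m. w j * s j x * s j x')\<bar>
        = \<bar>\<Sum>j<m. w j * (f j x * f j x' - s j x * s j x')\<bar>"
      by (simp add: sum_subtractf[symmetric] algebra_simps)
    also have "\<dots> \<le> (\<Sum>j<m. w j * (3 * \<eta>))"
      using w close by (intro order.trans[OF sum_abs sum_mono]) (auto simp: abs_mult mult_left_mono)
    also have "\<dots> = 3 * \<eta> * W"
      by (simp add: W_def sum_distrib_right mult.commute)
    finally show ?thesis
      using \<eta>_total by linarith
  qed
  with s show ?thesis
    by blast
qed

section \<open>The feature functions of the kernel\<close>

lemma continuous_on_psi:
  assumes "continuous_on UNIV (\<lambda>(s, t). K s t)"
  shows "continuous_on UNIV (\<lambda>q. psi K (fst q) (snd q) :: real)"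
proof -
  have "(\<lambda>q. psi K (fst q) (snd q)) =
      (\<lambda>(s, t). K s t) \<circ> (\<lambda>q :: ('a::euclidean_space \<times> real \<times> real) \<times> 'a.
        (inner (fst (fst q)) (snd q) + fst (snd (fst q)), snd (snd (fst q))))"
    by (auto simp: psi_def fun_eq_iff split: prod.splits)
  moreover have "continuous_on UNIV ((\<lambda>(s, t). K s t) \<circ> (\<lambda>q :: ('a \<times> real \<times> real) \<times> 'a.
        (inner (fst (fst q)) (snd q) + fst (snd (fst q)), snd (snd (fst q)))))"
    by (rule continuous_on_compose[OF _ continuous_on_subset[OF assms]], intro continuous_intros; simp)
  ultimately show ?thesis
    by (simp only:)
qed

lemma continuous_on_psi_product:
  assumes "continuous_on UNIV (\<lambda>(s, t). K s t)"
  shows "continuous_on UNIV (\<lambda>(z, x, x'). psi K z x * psi K z x' :: real)"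
proof -
  have "continuous_on UNIV (\<lambda>q. psi K (fst (fst q, fst (snd q))) (snd (fst q, fst (snd q))))"
    and "continuous_on UNIV (\<lambda>q. psi K (fst (fst q, snd (snd q))) (snd (fst q, snd (snd q))))"
    by (rule continuous_on_compose2[OF continuous_on_psi[OF assms]], intro continuous_intros, simp)+
  from continuous_on_mult[OF this]
  show ?thesis
    by (simp add: case_prod_beta)
qed

lemma abs_psi_le_1:
  assumes "\<And>s t. \<bar>K s t\<bar> \<le> 1"
  shows "\<bar>psi K z x\<bar> \<le> 1"
  using assms by (auto simp: psi_def split: prod.splits)

lemma K_rho_uniformly_approximable_by_feature_cone:
  fixes X :: "'a::euclidean_space set" and \<rho> :: "('a \<times> real \<times> real) measure"
  assumes "compact X" and K: "continuous_on UNIV (\<lambda>(s, t). K s t)" "\<And>s t. \<bar>K s t\<bar> \<le> 1"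
    and \<rho>: "sets \<rho> = sets borel" "finite_measure \<rho>"
  shows "uniformly_approximable (X \<times> X) (feature_cone (sup_closure X {psi K z | z. True}))
           (\<lambda>(x, x'). K_rho K \<rho> x x')"
  unfolding uniformly_approximable_def
proof (intro allI impI)
  fix e :: real assume "e > 0"
  define g :: "('a \<times> real \<times> real) \<times> 'a \<times> 'a \<Rightarrow> real"
    where "g = (\<lambda>(z, x, x'). psi K z x * psi K z x')"
  have g_cont: "continuous_on (UNIV \<times> (X \<times> X)) g"
    unfolding g_def by (rule continuous_on_subset[OF continuous_on_psi_product[OF K(1)]]) simp
  have g_bound: "\<bar>g (z, p)\<bar> \<le> 1" for z p
    by (cases p) (auto simp: g_def abs_mult intro!: mult_le_one abs_psi_le_1 K(2))
  obtain m :: nat and w c where w: "\<And>j. j < m \<Longrightarrow> w j \<ge> 0"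
    and approx: "\<And>p. p \<in> X \<times> X \<Longrightarrow> \<bar>(\<integral>z. g (z, p) \<partial>\<rho>) - (\<Sum>j<m. w j * g (c j, p))\<bar> < e"
    by (rule finite_measure_uniform_quadrature[OF \<rho>(2,1) compact_Times[OF \<open>compact X\<close> \<open>compact X\<close>]
          g_cont g_bound \<open>e > 0\<close>]) (rule that)
  define f where "f j = restrict (psi K (c j)) X" for j
  have "f j \<in> sup_closure X {psi K z | z. True}" for j
    unfolding f_def by (intro restrict_in_sup_closure) blast
  then have cone: "(\<lambda>(x, x'). \<Sum>j<m. w j * f j x * f j x') \<in> feature_cone (sup_closure X {psi K z | z. True})"
    unfolding feature_cone_def using w by blast
  have "\<bar>(\<Sum>j<m. w j * f j x * f j x') - K_rho K \<rho> x x'\<bar> < e" if "x \<in> X" "x' \<in> X" for x x'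
    using approx[of "(x, x')"] that by (simp add: f_def g_def K_rho_def abs_minus_commute mult.assoc)
  with cone show "\<exists>f\<in>feature_cone (sup_closure X {psi K z | z. True}).
      \<forall>p\<in>X \<times> X. \<bar>f p - (\<lambda>(x, x'). K_rho K \<rho> x x') p\<bar> < e"
    by (intro bexI[OF _ cone]) auto
qed

lemma K_rho_finite_point_masses:
  fixes z :: "nat \<Rightarrow> 'a::euclidean_space \<times> real \<times> real" and m :: nat
  assumes K: "continuous_on UNIV (\<lambda>(s, t). K s t)" and w: "\<And>j. j < m \<Longrightarrow> w j \<ge> 0"
  obtains \<rho> :: "('a \<times> real \<times> real) measure"
  where "sets \<rho> = sets borel" and "finite_measure \<rho>"
    and "\<And>x x'. K_rho K \<rho> x x' = (\<Sum>j<m. w j * psi K (z j) x * psi K (z j) x')"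
proof -
  obtain \<rho> :: "('a \<times> real \<times> real) measure" where \<rho>: "sets \<rho> = sets borel" "finite_measure \<rho>"
    and integral_\<rho>: "\<And>f :: _ \<Rightarrow> real. f \<in> borel_measurable borel \<Longrightarrow> (\<integral>y. f y \<partial>\<rho>) = (\<Sum>j<m. w j * f (z j))"
    by (rule finite_point_masses_measure[where m = m and w = w and z = z]) (use w in blast)+
  have meas: "(\<lambda>z. psi K z x * psi K z x') \<in> borel_measurable borel" for x x'
  proof -
    have "continuous_on UNIV (\<lambda>z. (\<lambda>(z, x, x'). psi K z x * psi K z x') (z, x, x'))"
      by (rule continuous_on_compose2[OF continuous_on_psi_product[OF K]]) (intro continuous_intros, simp)
    then show ?thesis
      by (intro borel_measurable_continuous_onI) simp
  qed
  have "K_rho K \<rho> x x' = (\<Sum>j<m. w j * psi K (z j) x * psi K (z j) x')" for x x'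
    unfolding K_rho_def integral_\<rho>[OF meas] by (simp add: mult.assoc)
  with \<rho> show thesis
    by (rule that)
qed

lemma feature_cone_uniformly_approximable_by_K_rho:
  fixes X :: "'a::euclidean_space set"
  assumes K: "continuous_on UNIV (\<lambda>(s, t). K s t)" "\<And>s t. \<bar>K s t\<bar> \<le> 1"
    and f: "f \<in> feature_cone (sup_closure X {psi K z | z. True})"
  shows "uniformly_approximable (X \<times> X)
           {(\<lambda>(x, x'). K_rho K \<rho> x x') | \<rho> :: ('a \<times> real \<times> real) measure.
              sets \<rho> = sets borel \<and> finite_measure \<rho>} f"
  unfolding uniformly_approximable_def
proof (intro allI impI)
  fix e :: real assume "e > 0"
  obtain m :: nat and w h where f_eq: "f = (\<lambda>(x, x'). \<Sum>j<m. w j * h j x * h j x')"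
    and w: "\<And>j. j < m \<Longrightarrow> w j \<ge> 0" and h: "\<And>j. j < m \<Longrightarrow> h j \<in> sup_closure X {psi K z | z. True}"
    using f unfolding feature_cone_def by blast
  have h_approx: "uniformly_approximable X {psi K z | z. True} (h j)" if "j < m" for j
    using h[OF that] by (simp add: sup_closure_iff)
  have psi_bounded: "\<bar>s x\<bar> \<le> 1" if "s \<in> {psi K z | z. True}" "x \<in> X" for s x
    using that abs_psi_le_1[of K, OF K(2)] by blast
  have "\<exists>s. (\<forall>j<m. s j \<in> {psi K z | z. True}) \<and> (\<forall>x\<in>X. \<forall>x'\<in>X.
      \<bar>(\<Sum>j<m. w j * h j x * h j x') - (\<Sum>j<m. w j * s j x * s j x')\<bar> < e)"
    by (rule uniformly_approximable_weighted_square_sum) (use w h_approx psi_bounded \<open>e > 0\<close> in auto)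
  then obtain s where s: "\<And>j. j < m \<Longrightarrow> s j \<in> {psi K z | z. True}"
    and close: "\<And>x x'. x \<in> X \<Longrightarrow> x' \<in> X \<Longrightarrow>
      \<bar>(\<Sum>j<m. w j * h j x * h j x') - (\<Sum>j<m. w j * s j x * s j x')\<bar> < e"
    by blast
  have "\<forall>j. \<exists>z. j < m \<longrightarrow> s j = psi K z"
    using s by blast
  then obtain z where z: "\<And>j. j < m \<Longrightarrow> s j = psi K (z j)"
    by metis
  obtain \<rho> :: "('a \<times> real \<times> real) measure" where \<rho>: "sets \<rho> = sets borel" "finite_measure \<rho>"
    and K_rho_eq: "\<And>x x'. K_rho K \<rho> x x' = (\<Sum>j<m. w j * psi K (z j) x * psi K (z j) x')"
    by (rule K_rho_finite_point_masses[OF K(1), where m = m and w = w and z = z]) (use w in blast)+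
  have "K_rho K \<rho> x x' = (\<Sum>j<m. w j * s j x * s j x')" for x x'
    unfolding K_rho_eq by (rule sum.cong) (simp_all add: z)
  moreover have "(\<lambda>(x, x'). K_rho K \<rho> x x') \<in> {(\<lambda>(x, x'). K_rho K \<rho> x x') | \<rho> :: ('a \<times> real \<times> real) measure.
        sets \<rho> = sets borel \<and> finite_measure \<rho>}"
    using \<rho> by blast
  ultimately show "\<exists>g\<in>{(\<lambda>(x, x'). K_rho K \<rho> x x') | \<rho> :: ('a \<times> real \<times> real) measure.
        sets \<rho> = sets borel \<and> finite_measure \<rho>}. \<forall>p\<in>X \<times> X. \<bar>g p - f p\<bar> < e"
    by (intro bexI[of _ "\<lambda>(x, x'). K_rho K \<rho> x x'"]) (auto simp: f_eq abs_minus_commute close)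
qed

theorem proposition3:
  fixes X :: "'a::euclidean_space set"
    and K :: "real \<Rightarrow> real \<Rightarrow> real"
  assumes "compact X"
    and "continuous_on UNIV (\<lambda>(s, t). K s t)"
    and "pd_kernel K"
    and "\<And>s t. \<bar>K s t\<bar> \<le> 1"
  shows "sup_closure (X \<times> X)
           {(\<lambda>(x, x'). K_rho K \<rho> x x') | \<rho> :: ('a \<times> real \<times> real) measure.
              sets \<rho> = sets borel \<and> finite_measure \<rho>}
       = sup_closure (X \<times> X) (feature_cone (sup_closure X {psi K z | z. True}))"
  using K_rho_uniformly_approximable_by_feature_cone[OF assms(1,2,4)]
    feature_cone_uniformly_approximable_by_K_rho[OF assms(2,4)]
  by (intro sup_closure_eqI) auto

end
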